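(* Let $M$ be a complex manifold, $\mathcal U=\{U_0,U_1\}$ an open covering, $U_{01}=U_0\cap U_1$. (1) The map $\mathcal E^{p,q}_{\rm A}(\mathcal U)\to\mathcal E^{p+1,q}(\mathcal U)$, $(\xi_0,\xi_1,\xi^{(1)}_{01},\xi^{(2)}_{01})\mapsto(\partial\xi_0,\partial\xi_1,-\partial\xi^{(1)}_{01})$, induces a homomorphism $\partial:H^{p,q}_{\rm A}(\mathcal U)\to H^{p+1,q}_{\bar\vartheta}(\mathcal U)$, which is compatible, via the isomorphisms $H^{p,q}_{\rm A}(M)\cong H^{p,q}_{\rm A}(\mathcal U)$ (induced by $\omega\mapsto(\omega,\omega,0,0)$) and $H^{p+1,q}_{\bar\partial}(M)\cong H^{p+1,q}_{\bar\vartheta}(\mathcal U)$ (induced by $\omega\mapsto(\omega,\omega,0)$), with the homomorphism $\partial:H^{p,q}_{\rm A}(M)\to H^{p+1,q}_{\bar\partial}(M)$, $[\omega]\mapsto[\partial\omega]$. (2) If $S\subset M$ is closed, $U_0=M\setminus S$ and $U_1\supset S$, the map $\mathcal E^{p,q}_{\rm A}(\mathcal U,U_0)\to\mathcal E^{p+1,q}(\mathcal U,U_0)$, $(\xi_1,\xi^{(1)}_{01},\xi^{(2)}_{01})\mapsto(\partial\xi_1,-\partial\xi^{(1)}_{01})$, induces a homomorphism $\partial:H^{p,q}_{\rm A}(\mathcal U,U_0)\to H^{p+1,q}_{\bar\vartheta}(\mathcal U,U_0)$.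
   Context: $\mathcal E^{a,b}$ is the sheaf of $C^\infty$ $(a,b)$-forms, $d=\partial+\bar\partial$. Čech–Aeppli complex of type $(p,q)$: cochains $\xi=(\xi_0,\xi_1,\xi^{(1)}_{01},\xi^{(2)}_{01})\in\mathcal E^{p,q}_{\rm A}(\mathcal U)=\mathcal E^{p,q}(U_0)\oplus\mathcal E^{p,q}(U_1)\oplus\mathcal E^{p,q-1}(U_{01})\oplus\mathcal E^{p-1,q}(U_{01})$; cocycles: $\bar\partial\partial\xi_0=\bar\partial\partial\xi_1=0$, $\xi_1-\xi_0-\bar\partial\xi^{(1)}_{01}-\partial\xi^{(2)}_{01}=0$; coboundaries: $\xi_i=\bar\partial\eta_i^{(1)}+\partial\eta_i^{(2)}$, $\xi^{(1)}_{01}=\eta_1^{(1)}-\eta_0^{(1)}-\partial\eta_{01}$, $\xi^{(2)}_{01}=\eta_1^{(2)}-\eta_0^{(2)}-\bar\partial\eta_{01}$ with $\eta_i^{(1)}\in\mathcal E^{p,q-1}(U_i)$, $\eta_i^{(2)}\in\mathcal E^{p-1,q}(U_i)$, $\eta_{01}\in\mathcal E^{p-1,q-1}(U_{01})$; $H^{p,q}_{\rm A}(\mathcal U)$ is the quotient. Relative version: cochains with $\xi_0=0$, i.e. $(\xi_1,\xi^{(1)}_{01},\xi^{(2)}_{01})$; cocycles $\bar\partial\partial\xi_1=0$, $\xi_1-\bar\partial\xi^{(1)}_{01}-\partial\xi^{(2)}_{01}=0$; coboundaries are images of $(\chi_1,\chi_{01})\in(\mathcal E^{p,q-1}\oplus\mathcal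 E^{p-1,q})(U_1)\oplus(\mathcal E^{p,q-2}\oplus\mathcal E^{p-1,q-1}\oplus\mathcal E^{p-2,q})$-type data under the relative differential $(\chi_1,\chi_{01})\mapsto(\bar\partial\chi_1^{(1)}+\partial\chi_1^{(2)},\chi_1-d\chi_{01})$ where $\chi_{01}\in\mathcal E^{(p-1,q-1)+1}$-level degree is as in the general construction: for a complex $K^\bullet$, $K^r(\mathcal U,U_0)=K^r(U_1)\oplus K^{r-1}(U_{01})$, $D(\sigma_1,\sigma_{01})=(d_K\sigma_1,\sigma_1-d_K\sigma_{01})$, applied to the complex $\cdots\to\mathcal E^{p-1,q-1}\xrightarrow{d}\mathcal E^{p,q-1}\oplus\mathcal E^{p-1,q}\xrightarrow{(\alpha,\beta)\mapsto\bar\partial\alpha+\partial\beta}\mathcal E^{p,q}\xrightarrow{\bar\partial\partial}\mathcal E^{p+1,q+1}$ with $d\omega=(\partial\omega,\bar\partial\omega)$. Čech–Dolbeault complex: $\mathcal E^{a,b}(\mathcal U)=\mathcal E^{a,b}(U_0)\oplus\mathcal E^{a,b}(U_1)\oplus\mathcal E^{a,b-1}(U_{01})$, $\bar\vartheta(\sigma_0,\sigma_1,\sigma_{01})=(\bar\partial\sigma_0,\bar\partial\sigma_1,\sigma_1-\sigma_0-\bar\partial\sigma_{01})$, cohomology $H^{a,b}_{\bar\vartheta}(\mathcal U)$; relative subcomplex with first component zero, cohomology $H^{a,b}_{\bar\vartheta}(\mathcal U,U_0)$. $H^{p,q}_{\rm A}(M)=\ker\bar\partial\partial/(\operatorname{Im}\bar\partial+\operatorname{Im}\partial)$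 on $\mathcal E^{p,q}(M)$. *)

theory Defs
  imports "HOL-Analysis.Analysis"
begin

text \<open>Abstract model of the sheaf of smooth (a,b)-forms on a complex manifold M
  (the manifold is the topological space UNIV).  E V a b is the group of (a,b)-forms
  on the open set V (E V a b = {0} for negative degrees), res V W is restriction
  from V to W, del and dbar are the operators with d = del + dbar.\<close>

definition forms_structure ::
  "('x::topological_space set \<Rightarrow> int \<Rightarrow> int \<Rightarrow> 'f::ab_group_add set)
   \<Rightarrow> ('x set \<Rightarrow> 'x set \<Rightarrow> 'f \<Rightarrow> 'f) \<Rightarrow> ('f \<Rightarrow> 'f) \<Rightarrow> ('f \<Rightarrow> 'f) \<Rightarrow> bool" where
  "forms_structure E res del dbar \<longleftrightarrow>
     (\<forall>V a b. 0 \<in> E V a b \<and> (\<forall>x\<in>E V a b. \<forall>y\<in>E V a b. x + y \<in> E V a b \<and> - x \<in> E V a b)) \<and>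
     (\<forall>V a b. (a < 0 \<or> b < 0) \<longrightarrow> E V a b = {0}) \<and>
     (\<forall>V a b. \<forall>x\<in>E V a b. del x \<in> E V (a + 1) b \<and> dbar x \<in> E V a (b + 1)) \<and>
     (\<forall>x y. del (x + y) = del x + del y \<and> dbar (x + y) = dbar x + dbar y) \<and>
     (\<forall>x. del (del x) = 0 \<and> dbar (dbar x) = 0 \<and> del (dbar x) = - dbar (del x)) \<and>
     (\<forall>V W a b. W \<subseteq> V \<longrightarrow> (\<forall>x\<in>E V a b.
         res V W x \<in> E W a b \<and> del (res V W x) = res V W (del x)
         \<and> dbar (res V W x) = res V W (dbar x))) \<and>
     (\<forall>V W x y. res V W (x + y) = res V W x + res V W y) \<and>
     (\<forall>V W Z a b. Z \<subseteq> W \<and> W \<subseteq> V \<longrightarrow> (\<forall>x\<in>E V a b. res W Z (res V W x) = res V Z x))"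

text \<open>A map f induces a homomorphism on the quotients Z/B -> Z'/B'.\<close>
definition induces_hom :: "('a::ab_group_add \<Rightarrow> 'b::ab_group_add) \<Rightarrow> 'a set \<Rightarrow> 'a set \<Rightarrow> 'b set \<Rightarrow> 'b set \<Rightarrow> bool" where
  "induces_hom f Z B Z' B' \<longleftrightarrow> f ` Z \<subseteq> Z' \<and> f ` B \<subseteq> B' \<and> (\<forall>x\<in>Z. \<forall>y\<in>Z. f (x + y) = f x + f y)"

definition A_cocycles where
  "A_cocycles E res del dbar U0 U1 p q =
     {(x0, x1, y1, y2). x0 \<in> E U0 p q \<and> x1 \<in> E U1 p q \<and> y1 \<in> E (U0 \<inter> U1) p (q - 1)
        \<and> y2 \<in> E (U0 \<inter> U1) (p - 1) q \<and> dbar (del x0) = 0 \<and> dbar (del x1) = 0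
        \<and> res U1 (U0 \<inter> U1) x1 - res U0 (U0 \<inter> U1) x0 - dbar y1 - del y2 = 0}"

definition A_coboundaries where
  "A_coboundaries E res del dbar U0 U1 p q =
     {(dbar a0 + del b0, dbar a1 + del b1,
       res U1 (U0 \<inter> U1) a1 - res U0 (U0 \<inter> U1) a0 - del h,
       res U1 (U0 \<inter> U1) b1 - res U0 (U0 \<inter> U1) b0 - dbar h) | a0 b0 a1 b1 h.
       a0 \<in> E U0 p (q - 1) \<and> b0 \<in> E U0 (p - 1) q \<and> a1 \<in> E U1 p (q - 1)
       \<and> b1 \<in> E U1 (p - 1) q \<and> h \<in> E (U0 \<inter> U1) (p - 1) (q - 1)}"

text \<open>Relative version (cochains with xi_0 = 0).\<close>
definition A_rel_cocycles where
  "A_rel_cocycles E res del dbar U0 U1 p q =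
     {(x1, y1, y2). x1 \<in> E U1 p q \<and> y1 \<in> E (U0 \<inter> U1) p (q - 1)
        \<and> y2 \<in> E (U0 \<inter> U1) (p - 1) q \<and> dbar (del x1) = 0
        \<and> res U1 (U0 \<inter> U1) x1 - dbar y1 - del y2 = 0}"

definition A_rel_coboundaries where
  "A_rel_coboundaries E res del dbar U0 U1 p q =
     {(dbar a1 + del b1, res U1 (U0 \<inter> U1) a1 - del h, res U1 (U0 \<inter> U1) b1 - dbar h) | a1 b1 h.
       a1 \<in> E U1 p (q - 1) \<and> b1 \<in> E U1 (p - 1) q \<and> h \<in> E (U0 \<inter> U1) (p - 1) (q - 1)}"

definition D_cocycles where
  "D_cocycles E res dbar U0 U1 a b =
     {(s0, s1, s01). s0 \<in> E U0 a b \<and> s1 \<in> E U1 a b \<and> s01 \<in> E (U0 \<inter> U1) a (b - 1)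
        \<and> dbar s0 = 0 \<and> dbar s1 = 0
        \<and> res U1 (U0 \<inter> U1) s1 - res U0 (U0 \<inter> U1) s0 - dbar s01 = 0}"

definition D_coboundaries where
  "D_coboundaries E res dbar U0 U1 a b =
     {(dbar t0, dbar t1, res U1 (U0 \<inter> U1) t1 - res U0 (U0 \<inter> U1) t0 - dbar t01) | t0 t1 t01.
       t0 \<in> E U0 a (b - 1) \<and> t1 \<in> E U1 a (b - 1) \<and> t01 \<in> E (U0 \<inter> U1) a (b - 2)}"

definition D_rel_cocycles where
  "D_rel_cocycles E res dbar U0 U1 a b =
     {(s1, s01). s1 \<in> E U1 a b \<and> s01 \<in> E (U0 \<inter> U1) a (b - 1)
        \<and> dbar s1 = 0 \<and> res U1 (U0 \<inter> U1) s1 - dbar s01 = 0}"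

definition D_rel_coboundaries where
  "D_rel_coboundaries E res dbar U0 U1 a b =
     {(dbar t1, res U1 (U0 \<inter> U1) t1 - dbar t01) | t1 t01.
       t1 \<in> E U1 a (b - 1) \<and> t01 \<in> E (U0 \<inter> U1) a (b - 2)}"

definition A_ker where
  "A_ker E del dbar p q = {w \<in> E UNIV p q. dbar (del w) = 0}"

definition A_im where
  "A_im E del dbar p q = {dbar a + del b | a b. a \<in> E UNIV p (q - 1) \<and> b \<in> E UNIV (p - 1) q}"

definition Dol_ker where
  "Dol_ker E dbar a b = {w \<in> E UNIV a b. dbar w = 0}"

definition Dol_im where
  "Dol_im E dbar a b = dbar ` E UNIV a (b - 1)"

end

theory Submission
  imports Defs
begin

text \<open>Everything rests on the identity \<open>del (dbar a + del b) = dbar (- del a)\<close>, which follows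
  from \<open>del \<circ> del = 0\<close> and \<open>del \<circ> dbar = - dbar \<circ> del\<close>. Applied to the gluing condition
  \<open>\<xi>\<^sub>1 - \<xi>\<^sub>0 = dbar \<xi>\<^sub>0\<^sub>1\<^sup>1 + del \<xi>\<^sub>0\<^sub>1\<^sup>2\<close> of an Aeppli cocycle it gives the Dolbeault gluing condition
  for \<open>(del \<xi>\<^sub>0, del \<xi>\<^sub>1, - del \<xi>\<^sub>0\<^sub>1\<^sup>1)\<close>; applied to an Aeppli coboundary built from
  \<open>\<eta>\<^sub>i\<^sup>1, \<eta>\<^sub>i\<^sup>2, \<eta>\<^sub>0\<^sub>1\<close> it exhibits the image as the Dolbeault coboundary of
  \<open>(- del \<eta>\<^sub>0\<^sup>1, - del \<eta>\<^sub>1\<^sup>1, 0)\<close>, the term \<open>del (del \<eta>\<^sub>0\<^sub>1)\<close> vanishing. The relative case is the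
  same computation with \<open>\<xi>\<^sub>0 = 0\<close>.\<close>

definition cech_del :: "('f \<Rightarrow> 'f::uminus) \<Rightarrow> 'f \<times> 'f \<times> 'f \<times> 'f \<Rightarrow> 'f \<times> 'f \<times> 'f" where
  "cech_del del = (\<lambda>(x0, x1, y1, y2). (del x0, del x1, - del y1))"

definition cech_rel_del :: "('f \<Rightarrow> 'f::uminus) \<Rightarrow> 'f \<times> 'f \<times> 'f \<Rightarrow> 'f \<times> 'f" where
  "cech_rel_del del = (\<lambda>(x1, y1, y2). (del x1, - del y1))"

locale forms_sheaf =
  fixes E :: "'x::topological_space set \<Rightarrow> int \<Rightarrow> int \<Rightarrow> 'f::ab_group_add set"
    and res :: "'x set \<Rightarrow> 'x set \<Rightarrow> 'f \<Rightarrow> 'f"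
    and del dbar :: "'f \<Rightarrow> 'f"
  assumes forms_structure: "forms_structure E res del dbar"
begin

lemma
  shows zero_mem: "0 \<in> E V a b"
    and uminus_mem: "x \<in> E V a b \<Longrightarrow> - x \<in> E V a b"
    and del_mem: "x \<in> E V a b \<Longrightarrow> del x \<in> E V (a + 1) b"
    and del_add: "del (x + y) = del x + del y"
    and dbar_add: "dbar (x + y) = dbar x + dbar y"
    and del_del: "del (del x) = 0"
    and del_dbar: "del (dbar x) = - dbar (del x)"
    and del_res: "W \<subseteq> V \<Longrightarrow> x \<in> E V a b \<Longrightarrow> del (res V W x) = res V W (del x)"
    and res_add: "res V W (x + y) = res V W x + res V W y"
proof -
  obtain group: "\<forall>V a b. 0 \<in> E V a b \<and> (\<forall>x\<in>E V a b. \<forall>y\<in>E V a b. x + y \<in> E V a b \<and> - x \<in> E V a b)"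
    and degree: "\<forall>V a b. \<forall>x\<in>E V a b. del x \<in> E V (a + 1) b \<and> dbar x \<in> E V a (b + 1)"
    and additive: "\<forall>x y. del (x + y) = del x + del y \<and> dbar (x + y) = dbar x + dbar y"
    and anticommute: "\<forall>x. del (del x) = 0 \<and> dbar (dbar x) = 0 \<and> del (dbar x) = - dbar (del x)"
    and restrict: "\<forall>V W a b. W \<subseteq> V \<longrightarrow> (\<forall>x\<in>E V a b.
         res V W x \<in> E W a b \<and> del (res V W x) = res V W (del x)
         \<and> dbar (res V W x) = res V W (dbar x))"
    and res_additive: "\<forall>V W x y. res V W (x + y) = res V W x + res V W y"
    using forms_structure unfolding forms_structure_def by (elim conjE) (rule that)
  show "0 \<in> E V a b" "x \<in> E V a b \<Longrightarrow> - x \<in> E V a b"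
    using group by blast+
  show "x \<in> E V a b \<Longrightarrow> del x \<in> E V (a + 1) b"
    using degree by blast
  show "del (x + y) = del x + del y" "dbar (x + y) = dbar x + dbar y"
    using additive by blast+
  show "del (del x) = 0" "del (dbar x) = - dbar (del x)"
    using anticommute by blast+
  show "W \<subseteq> V \<Longrightarrow> x \<in> E V a b \<Longrightarrow> del (res V W x) = res V W (del x)"
    using restrict by blast
  show "res V W (x + y) = res V W x + res V W y"
    using res_additive by blast
qed

sublocale del: additive del
  by unfold_locales (fact del_add)

sublocale dbar: additive dbar
  by unfold_locales (fact dbar_add)

sublocale res: additive "res V W" for V W
  by unfold_locales (fact res_add)

lemma del_dbar_plus_del: "del (dbar a + del b) = dbar (- del a)"
  by (simp add: del.add del_dbar del_del dbar.minus)

lemma del_cocycle_condition: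
  assumes "r - dbar y1 - del y2 = 0"
  shows "del r - dbar (- del y1) = 0"
proof -
  have "r = dbar y1 + del y2"
    using assms by (simp add: algebra_simps)
  then show ?thesis
    by (simp add: del_dbar_plus_del)
qed

lemma del_coboundary_gluing:
  assumes "W \<subseteq> V" "x \<in> E V a b"
  shows "- del (res V W x - del h) = res V W (- del x)"
  using assms by (simp add: del.diff del_del del_res res.minus)

lemma cech_del_A_cocycle:
  assumes "\<xi> \<in> A_cocycles E res del dbar U0 U1 p q"
  shows "cech_del del \<xi> \<in> D_cocycles E res dbar U0 U1 (p + 1) q"
proof -
  obtain x0 x1 y1 y2 where \<xi>: "\<xi> = (x0, x1, y1, y2)"
    and mem: "x0 \<in> E U0 p q" "x1 \<in> E U1 p q" "y1 \<in> E (U0 \<inter> U1) p (q - 1)"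
    and closed: "dbar (del x0) = 0" "dbar (del x1) = 0"
    and glue: "res U1 (U0 \<inter> U1) x1 - res U0 (U0 \<inter> U1) x0 - dbar y1 - del y2 = 0"
    using assms unfolding A_cocycles_def by blast
  have "res U1 (U0 \<inter> U1) (del x1) - res U0 (U0 \<inter> U1) (del x0) - dbar (- del y1)
      = del (res U1 (U0 \<inter> U1) x1 - res U0 (U0 \<inter> U1) x0) - dbar (- del y1)"
    using mem by (simp add: del.diff del_res)
  also have "\<dots> = 0"
    using glue by (rule del_cocycle_condition)
  finally show ?thesis
    unfolding \<xi> cech_del_def D_cocycles_def using mem closed
    by (auto intro: del_mem uminus_mem)
qed

lemma cech_del_A_coboundary:
  assumes "\<xi> \<in> A_coboundaries E res del dbar U0 U1 p q"
  shows "cech_del del \<xi> \<in> D_coboundaries E res dbar U0 U1 (p + 1) q"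
proof -
  obtain a0 b0 a1 b1 h where
    \<xi>: "\<xi> = (dbar a0 + del b0, dbar a1 + del b1,
          res U1 (U0 \<inter> U1) a1 - res U0 (U0 \<inter> U1) a0 - del h,
          res U1 (U0 \<inter> U1) b1 - res U0 (U0 \<inter> U1) b0 - dbar h)"
    and mem: "a0 \<in> E U0 p (q - 1)" "a1 \<in> E U1 p (q - 1)"
    using assms unfolding A_coboundaries_def by blast
  have "- del (res U1 (U0 \<inter> U1) a1 - res U0 (U0 \<inter> U1) a0 - del h)
      = - del (res U1 (U0 \<inter> U1) a1 - del h) - res U0 (U0 \<inter> U1) (- del a0)"
    using mem by (simp add: del.diff del_res res.minus)
  also have "\<dots> = res U1 (U0 \<inter> U1) (- del a1) - res U0 (U0 \<inter> U1) (- del a0) - dbar 0"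
    using mem by (simp add: del_coboundary_gluing dbar.zero)
  finally have "cech_del del \<xi> = (dbar (- del a0), dbar (- del a1),
      res U1 (U0 \<inter> U1) (- del a1) - res U0 (U0 \<inter> U1) (- del a0) - dbar 0)"
    unfolding \<xi> cech_del_def by (simp add: del_dbar_plus_del)
  moreover have "- del a0 \<in> E U0 (p + 1) (q - 1)" "- del a1 \<in> E U1 (p + 1) (q - 1)"
    using mem by (auto intro: del_mem uminus_mem)
  ultimately show ?thesis
    unfolding D_coboundaries_def using zero_mem by blast
qed

lemma cech_del_add: "cech_del del (\<xi> + \<zeta>) = cech_del del \<xi> + cech_del del \<zeta>"
  by (cases \<xi>; cases \<zeta>) (simp add: cech_del_def del.add)

lemma induces_hom_cech_del:
  "induces_hom (cech_del del)
     (A_cocycles E res del dbar U0 U1 p q) (A_coboundaries E res del dbar U0 U1 p q)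
     (D_cocycles E res dbar U0 U1 (p + 1) q) (D_coboundaries E res dbar U0 U1 (p + 1) q)"
  unfolding induces_hom_def
  using cech_del_A_cocycle cech_del_A_coboundary cech_del_add by blast

lemma cech_rel_del_A_rel_cocycle:
  assumes "\<xi> \<in> A_rel_cocycles E res del dbar U0 U1 p q"
  shows "cech_rel_del del \<xi> \<in> D_rel_cocycles E res dbar U0 U1 (p + 1) q"
proof -
  obtain x1 y1 y2 where \<xi>: "\<xi> = (x1, y1, y2)"
    and mem: "x1 \<in> E U1 p q" "y1 \<in> E (U0 \<inter> U1) p (q - 1)"
    and closed: "dbar (del x1) = 0"
    and glue: "res U1 (U0 \<inter> U1) x1 - dbar y1 - del y2 = 0"
    using assms unfolding A_rel_cocycles_def by blast
  have "res U1 (U0 \<inter> U1) (del x1) - dbar (- del y1) = 0"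
    using del_cocycle_condition[OF glue] mem by (simp add: del_res)
  then show ?thesis
    unfolding \<xi> cech_rel_del_def D_rel_cocycles_def using mem closed
    by (auto intro: del_mem uminus_mem)
qed

lemma cech_rel_del_A_rel_coboundary:
  assumes "\<xi> \<in> A_rel_coboundaries E res del dbar U0 U1 p q"
  shows "cech_rel_del del \<xi> \<in> D_rel_coboundaries E res dbar U0 U1 (p + 1) q"
proof -
  obtain a1 b1 h where
    \<xi>: "\<xi> = (dbar a1 + del b1, res U1 (U0 \<inter> U1) a1 - del h, res U1 (U0 \<inter> U1) b1 - dbar h)"
    and mem: "a1 \<in> E U1 p (q - 1)"
    using assms unfolding A_rel_coboundaries_def by blast
  have "cech_rel_del del \<xi> = (dbar (- del a1), res U1 (U0 \<inter> U1) (- del a1) - dbar 0)"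
    unfolding \<xi> cech_rel_del_def using mem
    by (simp add: del_dbar_plus_del del_coboundary_gluing dbar.zero)
  moreover have "- del a1 \<in> E U1 (p + 1) (q - 1)"
    using mem by (auto intro: del_mem uminus_mem)
  ultimately show ?thesis
    unfolding D_rel_coboundaries_def using zero_mem by blast
qed

lemma cech_rel_del_add: "cech_rel_del del (\<xi> + \<zeta>) = cech_rel_del del \<xi> + cech_rel_del del \<zeta>"
  by (cases \<xi>; cases \<zeta>) (simp add: cech_rel_del_def del.add)

lemma induces_hom_cech_rel_del:
  "induces_hom (cech_rel_del del)
     (A_rel_cocycles E res del dbar U0 U1 p q) (A_rel_coboundaries E res del dbar U0 U1 p q)
     (D_rel_cocycles E res dbar U0 U1 (p + 1) q) (D_rel_coboundaries E res dbar U0 U1 (p + 1) q)"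
  unfolding induces_hom_def
  using cech_rel_del_A_rel_cocycle cech_rel_del_A_rel_coboundary cech_rel_del_add by blast

lemma induces_hom_del:
  "induces_hom del (A_ker E del dbar p q) (A_im E del dbar p q)
     (Dol_ker E dbar (p + 1) q) (Dol_im E dbar (p + 1) q)"
proof -
  have "del w \<in> Dol_ker E dbar (p + 1) q" if "w \<in> A_ker E del dbar p q" for w
    using that unfolding A_ker_def Dol_ker_def by (auto intro: del_mem)
  moreover have "del \<omega> \<in> Dol_im E dbar (p + 1) q" if "\<omega> \<in> A_im E del dbar p q" for \<omega>
  proof -
    obtain a b where "\<omega> = dbar a + del b" "a \<in> E UNIV p (q - 1)"
      using \<open>\<omega> \<in> A_im E del dbar p q\<close> unfolding A_im_def by blast
    then show ?thesis
      unfolding Dol_im_def by (auto simp: del_dbar_plus_del intro: del_mem uminus_mem)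
  qed
  ultimately show ?thesis
    unfolding induces_hom_def by (auto simp: del.add)
qed

lemma cech_del_of_global_form:
  assumes "w \<in> E UNIV p q"
  shows "cech_del del (res UNIV U0 w, res UNIV U1 w, 0, 0)
           = (res UNIV U0 (del w), res UNIV U1 (del w), 0)"
  using assms by (simp add: cech_del_def del_res del.zero)

lemma zero_in_D_coboundaries: "0 \<in> D_coboundaries E res dbar U0 U1 a b"
proof -
  have "(0, 0, 0) = (dbar 0, dbar 0, res U1 (U0 \<inter> U1) 0 - res U0 (U0 \<inter> U1) 0 - dbar 0)"
    by (simp add: dbar.zero res.zero)
  then show ?thesis
    unfolding D_coboundaries_def zero_prod_def using zero_mem by blast
qed

end

theorem proposition3p26:
  fixes E :: "'x::topological_space set \<Rightarrow> int \<Rightarrow> int \<Rightarrow> 'f::ab_group_add set"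
    and res :: "'x set \<Rightarrow> 'x set \<Rightarrow> 'f \<Rightarrow> 'f"
    and del dbar :: "'f \<Rightarrow> 'f"
    and U0 U1 :: "'x set"
    and p q :: int
  assumes "forms_structure E res del dbar"
    and "open U0" and "open U1" and "U0 \<union> U1 = UNIV"
  shows
    "induces_hom (\<lambda>(x0, x1, y1, y2). (del x0, del x1, - del y1))
        (A_cocycles E res del dbar U0 U1 p q) (A_coboundaries E res del dbar U0 U1 p q)
        (D_cocycles E res dbar U0 U1 (p + 1) q) (D_coboundaries E res dbar U0 U1 (p + 1) q)
     \<and> induces_hom del (A_ker E del dbar p q) (A_im E del dbar p q)
        (Dol_ker E dbar (p + 1) q) (Dol_im E dbar (p + 1) q)
     \<and> (\<forall>w \<in> A_ker E del dbar p q.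
          (\<lambda>(x0, x1, y1, y2). (del x0, del x1, - del y1))
             (res UNIV U0 w, res UNIV U1 w, 0, 0::'f)
          - (res UNIV U0 (del w), res UNIV U1 (del w), 0)
          \<in> D_coboundaries E res dbar U0 U1 (p + 1) q)
     \<and> (\<forall>S. closed S \<and> U0 = UNIV - S \<and> S \<subseteq> U1 \<longrightarrow>
          induces_hom (\<lambda>(x1, y1, y2). (del x1, - del y1))
            (A_rel_cocycles E res del dbar U0 U1 p q) (A_rel_coboundaries E res del dbar U0 U1 p q)
            (D_rel_cocycles E res dbar U0 U1 (p + 1) q) (D_rel_coboundaries E res dbar U0 U1 (p + 1) q))"
proof -
  interpret forms_sheaf E res del dbar
    by (rule forms_sheaf.intro) (fact assms(1))
  have "cech_del del (res UNIV U0 w, res UNIV U1 w, 0, 0)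
          - (res UNIV U0 (del w), res UNIV U1 (del w), 0)
          \<in> D_coboundaries E res dbar U0 U1 (p + 1) q"
    if "w \<in> A_ker E del dbar p q" for w
    using that cech_del_of_global_form zero_in_D_coboundaries unfolding A_ker_def by auto
  then show ?thesis
    using induces_hom_cech_del induces_hom_del induces_hom_cech_rel_del
    unfolding cech_del_def cech_rel_del_def by blast
qed

end
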